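(* Let $p$ be an odd prime and let $X$ be a finite family of $4p-3$ lattice points in $\mathbb{Z}^2$ (repetitions allowed). Then (a) $-1+(p,X)-(2p,X)+(3p,X)\equiv 0 \pmod p$, and (b) $(p-1,X)-(2p-1,X)+(3p-1,X)\equiv 0 \pmod p$.
   Context: For a finite family $X$ of lattice points in $\mathbb{Z}^2$ (points may repeat; subsets are subfamilies, i.e. subsets of the index set) and an integer $n\ge 0$, $(n,X)$ denotes the number of $n$-element subfamilies of $X$ whose coordinatewise sum is congruent to $(0,0)$ modulo $p$. *)

theory Defs
  imports Main "HOL-Number_Theory.Cong"
begin

text \<open>A finite family of lattice points indexed by the finite set I, given by X :: 'i => int * int.
  subfam_count p n I X is the number of n-element subsets J of the index set I such that
  the coordinatewise sum of X over J is congruent to (0,0) modulo p.\<close>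

definition subfam_count :: "int \<Rightarrow> nat \<Rightarrow> 'i set \<Rightarrow> ('i \<Rightarrow> int \<times> int) \<Rightarrow> nat" where
  "subfam_count p n I X =
     card {J. J \<subseteq> I \<and> card J = n \<and>
              [(\<Sum>j\<in>J. fst (X j)) = 0] (mod p) \<and> [(\<Sum>j\<in>J. snd (X j)) = 0] (mod p)}"

end

theory Submission
  imports Defs "HOL-Number_Theory.Residues"
begin

text \<open>Modulo a prime p, the indicator of [a = 0] (mod p) is 1 - a^(p-1) (Fermat). Hence the
  condition on J \<subseteq> I that both coordinate sums and |J| + e vanish mod p is, mod p, a polynomial
  of degree 3(p-1) in the indicator variables [i \<in> J]. The alternating sum over all J \<subseteq> I of
  (-1)^|J| times such a polynomial vanishes as soon as its degree is below |I| = 4p - 3, so p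
  divides the signed count \<Sum> (-1)^n (n,X) over n \<le> 4p - 3 with p dvd n + e. For e = 0 these n
  are 0, p, 2p, 3p, and for e = 1 they are p - 1, 2p - 1, 3p - 1.\<close>

text \<open>indicator_poly d f: f is a polynomial of degree at most d in the variables x_i = [i \<in> J].\<close>

inductive indicator_poly :: "nat \<Rightarrow> ('i set \<Rightarrow> 'a::comm_ring_1) \<Rightarrow> bool" where
  const: "indicator_poly d (\<lambda>J. c)"
| times_indicator: "indicator_poly d f \<Longrightarrow> indicator_poly (Suc d) (\<lambda>J. if i \<in> J then f J else 0)"
| add: "indicator_poly d f \<Longrightarrow> indicator_poly d g \<Longrightarrow> indicator_poly d (\<lambda>J. f J + g J)"
| mono: "indicator_poly d f \<Longrightarrow> d \<le> e \<Longrightarrow> indicator_poly e f"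

lemma indicator_poly_cmult: "indicator_poly d f \<Longrightarrow> indicator_poly d (\<lambda>J. c * f J)"
proof (induction rule: indicator_poly.induct)
  case (times_indicator d f i)
  have "(\<lambda>J. c * (if i \<in> J then f J else 0)) = (\<lambda>J. if i \<in> J then c * f J else 0)"
    by auto
  then show ?case using indicator_poly.times_indicator[OF times_indicator.IH] by simp
next
  case (add d f g)
  then show ?case using indicator_poly.add[OF add.IH] by (simp add: distrib_left)
qed (auto intro: indicator_poly.intros)

lemma indicator_poly_mult:
  "indicator_poly d f \<Longrightarrow> indicator_poly e g \<Longrightarrow> indicator_poly (d + e) (\<lambda>J. f J * g J)"
proof (induction arbitrary: e g rule: indicator_poly.induct)
  case (const d c)
  then show ?case by (auto intro: indicator_poly.mono indicator_poly_cmult)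
next
  case (times_indicator d f i)
  have "(\<lambda>J. (if i \<in> J then f J else 0) * g J) = (\<lambda>J. if i \<in> J then f J * g J else 0)"
    by auto
  then show ?case
    using indicator_poly.times_indicator[OF times_indicator.IH[OF times_indicator.prems]] by simp
next
  case (add d f1 f2)
  then show ?case using indicator_poly.add[OF add.IH] by (simp add: distrib_right)
next
  case (mono d f d')
  then show ?case by (meson add_le_mono1 indicator_poly.mono)
qed

lemma indicator_poly_power: "indicator_poly d f \<Longrightarrow> indicator_poly (k * d) (\<lambda>J. f J ^ k)"
  by (induction k) (auto intro: indicator_poly.const indicator_poly_mult)

lemma indicator_poly_prod:
  assumes "finite K" "\<And>k. k \<in> K \<Longrightarrow> indicator_poly d (f k)"
  shows "indicator_poly (card K * d) (\<lambda>J. \<Prod>k\<in>K. f k J)"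
  using assms by (induction rule: finite_induct) (auto intro: indicator_poly.const indicator_poly_mult)

lemma indicator_poly_linear:
  fixes c :: "'i \<Rightarrow> 'a::comm_ring_1"
  assumes "finite I"
  shows "indicator_poly 1 (\<lambda>J. \<Sum>i\<in>J \<inter> I. c i)"
  using assms
proof (induction rule: finite_induct)
  case empty
  then show ?case by (simp add: indicator_poly.const)
next
  case (insert x F)
  have "indicator_poly 1 (\<lambda>J. if x \<in> J then c x else 0)"
    using indicator_poly.times_indicator[OF indicator_poly.const] by simp
  then have "indicator_poly 1 (\<lambda>J. (if x \<in> J then c x else 0) + (\<Sum>i\<in>J \<inter> F. c i))"
    using insert.IH by (rule indicator_poly.add)
  moreover have "(\<Sum>i\<in>J \<inter> insert x F. c i) = (if x \<in> J then c x else 0) + (\<Sum>i\<in>J \<inter> F. c i)" for J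
    using insert.hyps by (simp add: Int_insert_right)
  ultimately show ?case by simp
qed

lemma sum_Pow_insert:
  assumes "finite A" "a \<notin> A"
  shows "(\<Sum>J\<in>Pow (insert a A). h J) = (\<Sum>J\<in>Pow A. h J) + (\<Sum>J\<in>Pow A. h (insert a J))"
proof -
  have "inj_on (insert a) (Pow A)"
    using assms(2) by (intro inj_onI) (metis PowD insert_ident subsetD)
  moreover have "Pow A \<inter> insert a ` Pow A = {}"
    using assms(2) by blast
  ultimately show ?thesis
    using assms(1) by (simp add: Pow_insert sum.union_disjoint sum.reindex)
qed

lemma sum_Pow_alternating_eq_0:
  assumes "finite A" "A \<noteq> {}"
  shows "(\<Sum>J\<in>Pow A. (-1) ^ card J) = (0::'a::comm_ring_1)"
  proof -
  have "card A \<noteq> 0"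
    using assms by simp
  then show ?thesis
    using prod_diff_conv_sum[OF assms(1), of "\<lambda>_. 1::'a" "\<lambda>_. 1"] by (simp add: zero_power)
qed

text \<open>The shift by S makes the induction go through: a factor [i \<in> J] turns the alternating sum
  over subsets of I into one over subsets of I - {i}, shifted by i.\<close>
lemma alternating_sum_indicator_poly_eq_0:
  assumes "indicator_poly d f" "finite I" "d < card I"
  shows "(\<Sum>J\<in>Pow I. (-1) ^ card J * f (S \<union> J)) = 0"
  using assms
proof (induction arbitrary: I S rule: indicator_poly.induct)
  case (const d c)
  then have "I \<noteq> {}" by auto
  then show ?case
    using const.prems by (simp add: sum_Pow_alternating_eq_0 flip: sum_distrib_right)
next
  case (times_indicator d f i)
  consider "i \<in> S" | "i \<notin> S" "i \<notin> I" | "i \<notin> S" "i \<in> I"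
    by blast
  then show ?case
  proof cases
    case 1
    then show ?thesis using times_indicator by simp
  next
    case 2
    then show ?thesis by (auto intro!: sum.neutral)
  next
    case 3
    define A where "A = I - {i}"
    have I: "I = insert i A" "i \<notin> A" "finite A" "d < card A"
      using 3 times_indicator.prems by (auto simp: A_def)
    have "(\<Sum>J\<in>Pow A. (-1) ^ card (insert i J) * f (S \<union> insert i J))
        = - (\<Sum>J\<in>Pow A. (-1) ^ card J * f (insert i S \<union> J))"
    proof (simp flip: sum_negf, intro sum.cong refl)
      fix J assume "J \<in> Pow A"
      then have "finite J" "i \<notin> J"
        using I finite_subset by auto
      then show "(-1) ^ card (insert i J) * f (insert i (S \<union> J)) = - ((-1) ^ card J * f (insert i (S \<union> J)))"
        by simp
    qed
    also have "\<dots> = 0"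
      using times_indicator.IH[of A "insert i S"] I by simp
    finally have "(\<Sum>J\<in>Pow A. (-1) ^ card (insert i J) * f (S \<union> insert i J)) = 0" .
    moreover have "(\<Sum>J\<in>Pow A. (-1) ^ card J * (if i \<in> S \<union> J then f (S \<union> J) else 0)) = 0"
      using 3 I by (auto intro!: sum.neutral)
    ultimately show ?thesis
      using I by (simp add: sum_Pow_insert)
  qed
qed (auto simp: distrib_left sum.distrib)

lemma fermat_theorem_int:
  assumes "prime p" "\<not> int p dvd a"
  shows "[a ^ (p - 1) = 1] (mod int p)"
proof -
  define b where "b = nat (a mod int p)"
  have "int b = a mod int p"
    using assms(1) by (simp add: b_def prime_gt_0_nat)
  then have "[a = int b] (mod int p)" and "\<not> p dvd b"
    using assms(2) by (auto simp: cong_def dvd_mod_iff simp flip: int_dvd_int_iff)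
  then show ?thesis
    using fermat_theorem[OF assms(1)] by (metis cong_int_iff cong_pow cong_trans of_nat_1 of_nat_power)
qed

lemma cong_one_minus_power_prime:
  assumes "prime p"
  shows "[1 - a ^ (p - 1) = (if [a = 0] (mod int p) then 1 else 0)] (mod int p)"
proof (cases "int p dvd a")
  case True
  moreover have "p - 1 \<noteq> 0"
    using prime_gt_1_nat[OF assms] by simp
  ultimately have "int p dvd a ^ (p - 1)"
    using dvd_power dvd_trans by blast
  then show ?thesis
    using True by (simp add: cong_0_iff cong_iff_dvd_diff)
next
  case False
  then show ?thesis
    using cong_diff[OF cong_refl[of 1] fermat_theorem_int[OF assms False]] by (simp add: cong_0_iff)
qed

lemma alternating_solution_count_cong_0:
  fixes c :: "'k \<Rightarrow> 'i \<Rightarrow> int" and e :: "'k \<Rightarrow> int"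
  assumes "prime p" "finite I" "finite K" "card K * (p - 1) < card I"
  shows "[(\<Sum>J\<in>Pow I. (-1) ^ card J *
            (if \<forall>k\<in>K. [(\<Sum>i\<in>J. c k i) + e k = 0] (mod int p) then 1 else 0)) = 0] (mod int p)"
proof -
  define G where "G J = (\<Prod>k\<in>K. 1 - ((\<Sum>i\<in>J \<inter> I. c k i) + e k) ^ (p - 1))" for J
  have "indicator_poly (card K * (p - 1)) G"
    unfolding G_def using assms(3)
  proof (rule indicator_poly_prod)
    fix k
    have "indicator_poly (p - 1) (\<lambda>J. ((\<Sum>i\<in>J \<inter> I. c k i) + e k) ^ (p - 1))"
      using indicator_poly_power[OF indicator_poly.add[OF indicator_poly_linear[OF assms(2)] indicator_poly.const]]
      by simp
    then have "indicator_poly (p - 1) (\<lambda>J. 1 + (-1) * ((\<Sum>i\<in>J \<inter> I. c k i) + e k) ^ (p - 1))"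
      by (intro indicator_poly.add indicator_poly.const indicator_poly_cmult)
    then show "indicator_poly (p - 1) (\<lambda>J. 1 - ((\<Sum>i\<in>J \<inter> I. c k i) + e k) ^ (p - 1))"
      by simp
  qed
  then have G_sum: "(\<Sum>J\<in>Pow I. (-1) ^ card J * G ({} \<union> J)) = 0"
    using assms(2,4) by (rule alternating_sum_indicator_poly_eq_0)
  have "[(-1) ^ card J * (if \<forall>k\<in>K. [(\<Sum>i\<in>J. c k i) + e k = 0] (mod int p) then 1 else 0)
      = (-1) ^ card J * G J] (mod int p)" if "J \<subseteq> I" for J
  proof -
    have restrict: "J \<inter> I = J"
      using that by blast
    have "[G J = (\<Prod>k\<in>K. if [(\<Sum>i\<in>J. c k i) + e k = 0] (mod int p) then 1 else 0)] (mod int p)"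
      unfolding G_def restrict by (intro cong_prod cong_one_minus_power_prime assms(1))
    also have "(\<Prod>k\<in>K. if [(\<Sum>i\<in>J. c k i) + e k = 0] (mod int p) then 1 else 0)
        = (if \<forall>k\<in>K. [(\<Sum>i\<in>J. c k i) + e k = 0] (mod int p) then 1 else (0::int))"
      using assms(3) by (simp add: prod_zero_iff)
    finally show ?thesis
      by (rule cong_mult[OF cong_refl, THEN cong_sym])
  qed
  then have "[(\<Sum>J\<in>Pow I. (-1) ^ card J *
            (if \<forall>k\<in>K. [(\<Sum>i\<in>J. c k i) + e k = 0] (mod int p) then 1 else 0))
      = (\<Sum>J\<in>Pow I. (-1) ^ card J * G J)] (mod int p)"
    by (intro cong_sum) simp
  with G_sum show ?thesis
    by simp
qed

lemma sum_Pow_signed_by_card: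
  assumes "finite I"
  shows "(\<Sum>J\<in>Pow I. (-1) ^ card J * (if P J \<and> Q (card J) then 1 else 0))
       = (\<Sum>n | n \<le> card I \<and> Q n. (-1) ^ n * int (card {J. J \<subseteq> I \<and> card J = n \<and> P J}))"
proof -
  let ?S = "{J \<in> Pow I. P J \<and> Q (card J)}"
  have card_image: "card ` ?S \<subseteq> {n. n \<le> card I \<and> Q n}"
    using assms by (auto intro!: card_mono)
  have "(\<Sum>J\<in>Pow I. (-1) ^ card J * (if P J \<and> Q (card J) then 1 else 0))
      = (\<Sum>J\<in>Pow I. if P J \<and> Q (card J) then (-1) ^ card J else (0::int))"
    by (intro sum.cong) auto
  also have "\<dots> = (\<Sum>J\<in>?S. (-1) ^ card J)"
    using assms by (simp flip: sum.inter_filter)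
  also have "\<dots> = (\<Sum>n | n \<le> card I \<and> Q n. \<Sum>J | J \<in> ?S \<and> card J = n. (-1) ^ card J)"
    by (rule sum.group[symmetric]) (use assms card_image in auto)
  also have "\<dots> = (\<Sum>n | n \<le> card I \<and> Q n. (-1) ^ n * int (card {J. J \<subseteq> I \<and> card J = n \<and> P J}))"
  proof (rule sum.cong[OF refl])
    fix n assume "n \<in> {n. n \<le> card I \<and> Q n}"
    then have "{J. J \<in> ?S \<and> card J = n} = {J. J \<subseteq> I \<and> card J = n \<and> P J}"
      by auto
    then show "(\<Sum>J | J \<in> ?S \<and> card J = n. (-1) ^ card J) = (-1) ^ n * int (card {J. J \<subseteq> I \<and> card J = n \<and> P J})"
      by simp
  qed
  finally show ?thesis .
qed

lemma prime_dvd_signed_subfam_counts: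
  fixes p e :: nat and X :: "'i \<Rightarrow> int \<times> int"
  assumes "prime p" "finite I" "3 * (p - 1) < card I"
  shows "int p dvd (\<Sum>n | n \<le> card I \<and> p dvd n + e. (-1) ^ n * int (subfam_count (int p) n I X))"
proof -
  define c :: "nat \<Rightarrow> 'i \<Rightarrow> int"
    where "c k i = (if k = 0 then fst (X i) else if k = 1 then snd (X i) else 1)" for k i
  define e' where "e' k = (if k = 2 then int e else 0)" for k :: nat
  define P where "P J \<longleftrightarrow> [(\<Sum>j\<in>J. fst (X j)) = 0] (mod int p) \<and> [(\<Sum>j\<in>J. snd (X j)) = 0] (mod int p)"
    for J
  have conditions: "(\<forall>k\<in>{0, 1, 2}. [(\<Sum>i\<in>J. c k i) + e' k = 0] (mod int p))
      \<longleftrightarrow> P J \<and> p dvd card J + e" for J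
    by (simp add: c_def e'_def P_def cong_0_iff flip: of_nat_add int_dvd_int_iff)
  have "[(\<Sum>J\<in>Pow I. (-1) ^ card J *
           (if \<forall>k\<in>{0, 1, 2}. [(\<Sum>i\<in>J. c k i) + e' k = 0] (mod int p) then 1 else 0)) = 0] (mod int p)"
    using assms by (intro alternating_solution_count_cong_0) simp_all
  also have "(\<Sum>J\<in>Pow I. (-1) ^ card J *
           (if \<forall>k\<in>{0, 1, 2}. [(\<Sum>i\<in>J. c k i) + e' k = 0] (mod int p) then 1 else 0))
      = (\<Sum>n | n \<le> card I \<and> p dvd n + e. (-1) ^ n * int (card {J. J \<subseteq> I \<and> card J = n \<and> P J}))"
    unfolding conditions using assms(2) by (rule sum_Pow_signed_by_card)
  finally show ?thesis
    unfolding subfam_count_def P_def cong_0_iff .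
qed

lemma subfam_count_0: "finite I \<Longrightarrow> subfam_count p 0 I X = 1"
proof -
  assume "finite I"
  then have "{J. J \<subseteq> I \<and> card J = 0 \<and> [(\<Sum>j\<in>J. fst (X j)) = 0] (mod p)
      \<and> [(\<Sum>j\<in>J. snd (X j)) = 0] (mod p)} = {{}}"
    by (auto dest: finite_subset)
  then show ?thesis
    unfolding subfam_count_def by simp
qed

lemma multiples_atMost_4p_minus_3:
  fixes p :: nat
  assumes "p \<ge> 3"
  shows "{n. n \<le> 4 * p - 3 \<and> p dvd n} = {0, p, 2 * p, 3 * p}"
proof (intro Set.set_eqI HOL.iffI)
  fix n assume "n \<in> {n. n \<le> 4 * p - 3 \<and> p dvd n}"
  then obtain k where n: "n = p * k" and "p * k \<le> 4 * p - 3"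
    by blast
  then have "p * k < p * 4"
    using assms by linarith
  then have "k \<in> {0, 1, 2, 3}"
    by auto
  then show "n \<in> {0, p, 2 * p, 3 * p}"
    using n by auto
qed (use assms in auto)

lemma pred_multiples_atMost_4p_minus_3:
  fixes p :: nat
  assumes "p \<ge> 3"
  shows "{n. n \<le> 4 * p - 3 \<and> p dvd n + 1} = {p - 1, 2 * p - 1, 3 * p - 1}"
proof (intro Set.set_eqI HOL.iffI)
  fix n assume "n \<in> {n. n \<le> 4 * p - 3 \<and> p dvd n + 1}"
  then obtain k where n: "n + 1 = p * k" and "n \<le> 4 * p - 3"
    by blast
  then have "p * k < p * 4"
    using assms by linarith
  moreover have "k \<noteq> 0"
    using n by (intro notI) simp
  ultimately have "k \<in> {1, 2, 3}"
    by auto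
  then show "n \<in> {p - 1, 2 * p - 1, 3 * p - 1}"
    using n by auto
qed (use assms in auto)

theorem corollary5:
  fixes p :: nat and I :: "'i set" and X :: "'i \<Rightarrow> int \<times> int"
  assumes "prime p" and "odd p"
    and "finite I" and "card I = 4 * p - 3"
  shows "[- 1 + int (subfam_count (int p) p I X) - int (subfam_count (int p) (2 * p) I X)
            + int (subfam_count (int p) (3 * p) I X) = 0] (mod int p) \<and>
         [int (subfam_count (int p) (p - 1) I X) - int (subfam_count (int p) (2 * p - 1) I X)
            + int (subfam_count (int p) (3 * p - 1) I X) = 0] (mod int p)"
proof -
  let ?C = "\<lambda>n. int (subfam_count (int p) n I X)"
  have "p \<ge> 3"
    using assms(1,2) prime_ge_2_nat[of p] by (cases "p = 2") auto
  then have "3 * (p - 1) < card I"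
    using assms(4) by simp
  note signed = prime_dvd_signed_subfam_counts[OF assms(1,3) this, unfolded assms(4)]
  have "(\<Sum>n\<in>{0, p, 2 * p, 3 * p}. (-1) ^ n * ?C n) = ?C 0 - ?C p + ?C (2 * p) - ?C (3 * p)"
    using \<open>p \<ge> 3\<close> assms(2) by simp
  then have a: "int p dvd (?C 0 - ?C p + ?C (2 * p) - ?C (3 * p))"
    using signed[where e = 0 and X = X] multiples_atMost_4p_minus_3[OF \<open>p \<ge> 3\<close>] by simp
  have "(-1::int) ^ (p - 1) = 1" "(-1::int) ^ (2 * p - 1) = -1" "(-1::int) ^ (3 * p - 1) = 1"
    using assms(2) by (auto elim!: oddE simp: power_add power_mult)
  moreover have "distinct [p - 1, 2 * p - 1, 3 * p - 1]"
    using \<open>p \<ge> 3\<close> by auto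
  ultimately have "(\<Sum>n\<in>{p - 1, 2 * p - 1, 3 * p - 1}. (-1) ^ n * ?C n)
      = ?C (p - 1) - ?C (2 * p - 1) + ?C (3 * p - 1)"
    by simp
  then have b: "int p dvd (?C (p - 1) - ?C (2 * p - 1) + ?C (3 * p - 1))"
    using signed[where e = 1 and X = X] pred_multiples_atMost_4p_minus_3[OF \<open>p \<ge> 3\<close>] by simp
  have "?C 0 = 1"
    using subfam_count_0[OF assms(3)] by simp
  then have "- 1 + ?C p - ?C (2 * p) + ?C (3 * p) = - (?C 0 - ?C p + ?C (2 * p) - ?C (3 * p))"
    by simp
  with a b show ?thesis
    unfolding cong_0_iff by (metis dvd_minus_iff)
qed

end
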